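(* Suppose that $v_k\to\bar v\in\mathcal V$ as $k\to\infty$. Then $v_{k,\mu}\to\bar v$ as $k\to\infty$ for every $\mu\in\{0,\dots,L\}$.
   Context: Let $\mathcal V=\bigotimes_{\nu=1}^d\mathbb R^{m_\nu}\cong\mathbb R^N$ with the Euclidean inner product. Let $A\in\mathbb R^{N\times N}$ be symmetric positive definite, $b\in\mathcal V\setminus\{0\}$, $f(v)=\frac{1}{\|b\|^2}(\frac12\langle Av,v\rangle-\langle b,v\rangle)$. Let $L\ge d$, $P_1,\dots,P_L$ finite-dimensional real inner product spaces, $P=P_1\times\dots\times P_L$, $U:P\to\mathcal V$ multilinear. For $\mathbf p\in P$, $W_{\mu,\mathbf p^{[\mu]}}:P_\mu\to\mathcal V$ is $q\mapsto U(p_1,\dots,p_{\mu-1},q,p_{\mu+1},\dots,p_L)$; $X^T$ transpose, $X^+$ pseudoinverse. ALS: choose $\mathbf p_1=(p_1^1,\dots,p_L^1)\in P$; for $k=1,2,\dots$ and $\mu=1,\dots,L$ in order, $W_{k,\mu}:=W_{\mu,(p_1^{k+1},\dots,p_{\mu-1}^{k+1},p_{\mu+1}^k,\dots,p_L^k)}$ and $p_\mu^{k+1}:=(W_{k,\mu}^TAW_{k,\mu})^+W_{k,\mu}^Tb$. Put $v_k=U(p_1^k,\dots,p_L^k)$ and, for $\mu\in\{0,\dots,L\}$, $v_{k,\mu}=U(p_1^{k+1},\dots,p_\mu^{k+1},p_{\mu+1}^k,\dots,p_L^k)$. *)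

theory Defs
  imports "HOL-Analysis.Analysis"
begin

text \<open>The product space P = P_1 x ... x P_L, with all factors realised as subspaces
  of one ambient Euclidean space 'p; tuples are functions on indices, zero outside 1..L.\<close>
definition prodP :: "nat \<Rightarrow> (nat \<Rightarrow> 'p::euclidean_space set) \<Rightarrow> (nat \<Rightarrow> 'p) set" where
  "prodP L Ps = {p. (\<forall>i\<in>{1..L}. p i \<in> Ps i) \<and> (\<forall>i. i \<notin> {1..L} \<longrightarrow> p i = 0)}"

definition multilinear_on ::
  "nat \<Rightarrow> (nat \<Rightarrow> 'p::euclidean_space set) \<Rightarrow> ((nat \<Rightarrow> 'p) \<Rightarrow> 'v::real_vector) \<Rightarrow> bool" where
  "multilinear_on L Ps U \<longleftrightarrow>
     (\<forall>\<mu>\<in>{1..L}. \<forall>p\<in>prodP L Ps. \<forall>x\<in>Ps \<mu>. \<forall>y\<in>Ps \<mu>. \<forall>c::real.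
        U (p(\<mu> := x + y)) = U (p(\<mu> := x)) + U (p(\<mu> := y)) \<and>
        U (p(\<mu> := c *\<^sub>R x)) = c *\<^sub>R U (p(\<mu> := x)))"

definition adjoint_on :: "'p::euclidean_space set \<Rightarrow> ('p \<Rightarrow> 'v::real_inner) \<Rightarrow> 'v \<Rightarrow> 'p" where
  "adjoint_on S W v = (THE x. x \<in> S \<and> (\<forall>q\<in>S. inner x q = inner v (W q)))"

definition pinv_on :: "'p::euclidean_space set \<Rightarrow> ('p \<Rightarrow> 'p) \<Rightarrow> 'p \<Rightarrow> 'p" where
  "pinv_on S M y = (THE x. x \<in> S \<and> (\<forall>z\<in>S. M z = 0 \<longrightarrow> inner x z = 0)
                           \<and> M x = closest_point (M ` S) y)"

definition als_W :: "((nat \<Rightarrow> 'p) \<Rightarrow> 'v) \<Rightarrow> (nat \<Rightarrow> nat \<Rightarrow> 'p::zero) \<Rightarrow> nat \<Rightarrow> nat \<Rightarrow> 'p \<Rightarrow> 'v" where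
  "als_W U p k \<mu> q = U ((\<lambda>i. if i < \<mu> then p (Suc k) i else p k i)(\<mu> := q))"

definition als_v :: "((nat \<Rightarrow> 'p) \<Rightarrow> 'v) \<Rightarrow> (nat \<Rightarrow> nat \<Rightarrow> 'p) \<Rightarrow> nat \<Rightarrow> nat \<Rightarrow> 'v" where
  "als_v U p k \<mu> = U (\<lambda>i. if i \<le> \<mu> then p (Suc k) i else p k i)"

end

theory Submission imports Defs begin

text \<open>Every micro-step of ALS minimises the energy
  \<open>E(w) = \<langle>A w, w\<rangle>/2 - \<langle>b, w\<rangle>\<close> over the image of a linear map, so its result satisfies
  a Galerkin condition; this makes the energy drop of the step equal to
  \<open>\<langle>A e, e\<rangle>/2 \<ge> c \<parallel>e\<parallel>\<^sup>2\<close>, e the increment. Within sweep k the energies \<open>E(v\<^sub>k\<^sub>,\<^sub>\<mu>)\<close> decrease from \<open>E(v\<^sub>k)\<close> to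
  \<open>E(v\<^sub>k\<^sub>+\<^sub>1)\<close>, so every single drop is bounded by \<open>E(v\<^sub>k) - E(v\<^sub>k\<^sub>+\<^sub>1) \<rightarrow> 0\<close>.
  Hence consecutive micro-iterates become arbitrarily close, and induction on \<open>\<mu>\<close>
  carries the convergence of \<open>v\<^sub>k = v\<^sub>k\<^sub>,\<^sub>0\<close> to every \<open>v\<^sub>k\<^sub>,\<^sub>\<mu>\<close>.\<close>

lemma symmetric_matrix_inner_commute:
  fixes A :: "real^'n^'n"
  assumes "transpose A = A"
  shows "inner (A *v x) y = inner x (A *v y)"
  by (metis assms dot_lmul_matrix vector_transpose_matrix)

lemma pos_def_matrix_coercive:
  fixes A :: "real^'n^'n"
  assumes pos_def: "\<forall>x. x \<noteq> 0 \<longrightarrow> 0 < inner x (A *v x)"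
  obtains c where "c > 0" "\<And>x. c * (norm x)\<^sup>2 \<le> inner x (A *v x)"
proof -
  have "continuous_on (sphere 0 1) (\<lambda>x::real^'n. inner x (A *v x))"
    by (intro continuous_intros linear_continuous_on matrix_vector_mul_bounded_linear)
  moreover have "sphere (0::real^'n) 1 \<noteq> {}"
    by simp
  ultimately obtain x0 where x0: "x0 \<in> sphere 0 1"
    and min: "\<And>y. y \<in> sphere 0 1 \<Longrightarrow> inner x0 (A *v x0) \<le> inner y (A *v y)"
    using continuous_attains_inf[OF compact_sphere] by blast
  define c where "c = inner x0 (A *v x0)"
  have "x0 \<noteq> 0"
    using x0 by auto
  then have "c > 0"
    unfolding c_def using pos_def by blast
  moreover have "c * (norm x)\<^sup>2 \<le> inner x (A *v x)" for x
  proof (cases "x = 0")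
    case False
    have "c \<le> inner (x /\<^sub>R norm x) (A *v (x /\<^sub>R norm x))"
      unfolding c_def using False by (intro min) simp
    also have "\<dots> = inner x (A *v x) / (norm x)\<^sup>2"
      by (simp add: matrix_vector_mult_scaleR power2_eq_square field_simps)
    finally show ?thesis
      using False by (simp add: field_simps)
  qed simp
  ultimately show thesis
    using that by blast
qed

lemma orthogonal_basis_expansion:
  fixes B :: "'a::euclidean_space set"
  assumes "pairwise orthogonal B" "q \<in> span B"
  shows "(\<Sum>b\<in>B. (b \<bullet> q / (b \<bullet> b)) *\<^sub>R b) = q"
proof -
  let ?r = "q - (\<Sum>b\<in>B. (b \<bullet> q / (b \<bullet> b)) *\<^sub>R b)"
  have "?r \<in> span B"
    by (intro span_diff[OF assms(2)] span_sum span_scale span_base)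
  then have "orthogonal ?r ?r"
    using Gram_Schmidt_step[OF assms(1)] by blast
  then show ?thesis
    by (simp add: orthogonal_self)
qed

locale linear_on_subspace =
  fixes S :: "'p::euclidean_space set" and W :: "'p \<Rightarrow> 'v::real_inner"
  assumes subspace: "subspace S"
    and add: "x \<in> S \<Longrightarrow> y \<in> S \<Longrightarrow> W (x + y) = W x + W y"
    and scaleR: "x \<in> S \<Longrightarrow> W (c *\<^sub>R x) = c *\<^sub>R W x"
begin

lemma zero: "W 0 = 0"
  using scaleR[of 0 0] subspace by (simp add: subspace_0)

lemma diff: "x \<in> S \<Longrightarrow> y \<in> S \<Longrightarrow> W (x - y) = W x - W y"
  using add[of y "x - y"] subspace by (simp add: subspace_diff)

lemma sum_scaleR:
  "finite B \<Longrightarrow> B \<subseteq> S \<Longrightarrow> W (\<Sum>e\<in>B. f e *\<^sub>R e) = (\<Sum>e\<in>B. f e *\<^sub>R W e)"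
proof (induction B rule: finite_induct)
  case (insert a F)
  then have "(\<Sum>e\<in>F. f e *\<^sub>R e) \<in> S"
    using subspace by (auto intro!: subspace_sum subspace_scale)
  then show ?case
    using insert subspace by (simp add: add scaleR subspace_scale)
qed (simp add: zero)

lemma subspace_image: "subspace (W ` S)"
  unfolding subspace_def
proof (intro conjI ballI allI; clarsimp)
  show "0 \<in> W ` S"
    using zero subspace subspace_0 by force
  show "c *\<^sub>R W x \<in> W ` S" if "x \<in> S" for c x
    using that subspace scaleR[OF that] by (metis image_eqI subspace_scale)
  show "W x + W y \<in> W ` S" if "x \<in> S" "y \<in> S" for x y
    using that subspace add[OF that] by (metis image_eqI subspace_add)
qed

lemma subspace_kernel: "subspace {x \<in> S. W x = 0}"
  using subspace zero by (auto simp: subspace_def add scaleR)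

lemma adjoint_on_eqI:
  assumes "x \<in> S" "\<And>q. q \<in> S \<Longrightarrow> inner x q = inner v (W q)"
  shows "adjoint_on S W v = x"
  unfolding adjoint_on_def
proof (rule the_equality)
  fix y assume y: "y \<in> S \<and> (\<forall>q\<in>S. inner y q = inner v (W q))"
  have "y - x \<in> S"
    using y assms(1) subspace by (simp add: subspace_diff)
  moreover have "inner (y - x) (y - x) = 0"
    using y assms calculation by (simp add: inner_diff_left)
  ultimately show "y = x"
    by simp
qed (use assms in blast)

lemma adjoint_on_exists: "\<exists>x\<in>S. \<forall>q\<in>S. inner x q = inner v (W q)"
proof -
  obtain B where B: "B \<subseteq> S" "pairwise orthogonal B" "span B = S"
    using orthogonal_basis_subspace[OF subspace] by metis
  define x where "x = (\<Sum>b\<in>B. (inner v (W b) / (b \<bullet> b)) *\<^sub>R b)"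
  have "x \<in> S"
    unfolding x_def using B subspace by (auto intro!: subspace_sum subspace_scale)
  moreover have "inner x q = inner v (W q)" if "q \<in> S" for q
  proof -
    have "inner x q = inner v (\<Sum>b\<in>B. (b \<bullet> q / (b \<bullet> b)) *\<^sub>R W b)"
      unfolding x_def by (simp add: inner_sum_left inner_sum_right mult.commute)
    also have "(\<Sum>b\<in>B. (b \<bullet> q / (b \<bullet> b)) *\<^sub>R W b) = W q"
      using sum_scaleR[OF pairwise_orthogonal_imp_finite[OF B(2)] B(1), symmetric]
        orthogonal_basis_expansion[OF B(2), of q] that B(3) by simp
    finally show ?thesis .
  qed
  ultimately show ?thesis
    by blast
qed

lemma adjoint_on_mem: "adjoint_on S W v \<in> S"
  and inner_adjoint_on: "q \<in> S \<Longrightarrow> inner (adjoint_on S W v) q = inner v (W q)"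
  using adjoint_on_exists[of v] adjoint_on_eqI by metis+

lemma adjoint_on_add: "adjoint_on S W (u + v) = adjoint_on S W u + adjoint_on S W v"
  using subspace adjoint_on_mem
  by (intro adjoint_on_eqI) (simp_all add: subspace_add inner_add_left inner_adjoint_on)

lemma adjoint_on_scaleR: "adjoint_on S W (c *\<^sub>R v) = c *\<^sub>R adjoint_on S W v"
  using subspace adjoint_on_mem
  by (intro adjoint_on_eqI) (simp_all add: subspace_scale inner_adjoint_on)

end

lemma pinv_on_image:
  fixes M :: "'p::euclidean_space \<Rightarrow> 'p"
  assumes lin: "linear_on_subspace S M" and y: "y \<in> M ` S"
  shows "pinv_on S M y \<in> S \<and> M (pinv_on S M y) = y"
proof -
  interpret linear_on_subspace S M
    by (fact lin)
  let ?K = "{z \<in> S. M z = 0}"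
  let ?P = "\<lambda>x. x \<in> S \<and> (\<forall>z\<in>S. M z = 0 \<longrightarrow> inner x z = 0) \<and> M x = closest_point (M ` S) y"
  have closest: "closest_point (M ` S) y = y"
    using y by (rule closest_point_self)
  obtain z0 where z0: "z0 \<in> S" "M z0 = y"
    using y by blast
  obtain k r where kr: "k \<in> span ?K" "\<And>w. w \<in> span ?K \<Longrightarrow> orthogonal r w" "z0 = k + r"
    using orthogonal_subspace_decomp_exists by blast
  have "k \<in> ?K"
    using kr(1) subspace_kernel by (metis span_eq_iff)
  then have k: "k \<in> S" "M k = 0"
    by simp_all
  have "r = z0 - k"
    using kr(3) by simp
  then have r: "r \<in> S" "M r = y"
    using z0 k subspace by (simp_all add: diff subspace_diff)
  have "?P r"
    using r kr(2) closest by (auto simp: orthogonal_def intro: span_base)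
  moreover have "x = r" if "?P x" for x
  proof -
    have "x - r \<in> S" "M (x - r) = 0"
      using that r subspace by (simp_all add: diff subspace_diff closest)
    then have "inner (x - r) (x - r) = 0"
      using that \<open>?P r\<close> by (simp add: inner_diff_left)
    then show ?thesis
      by simp
  qed
  ultimately have "?P (pinv_on S M y)"
    unfolding pinv_on_def by (rule theI)
  then show ?thesis
    by (simp add: closest)
qed

lemma selfadjoint_image_orthogonal_kernel:
  fixes M :: "'p::euclidean_space \<Rightarrow> 'p"
  assumes lin: "linear_on_subspace S M" and into: "M ` S \<subseteq> S"
    and selfadjoint: "\<And>z q. z \<in> S \<Longrightarrow> q \<in> S \<Longrightarrow> inner (M z) q = inner z (M q)"
    and y: "y \<in> S" "\<And>z. z \<in> S \<Longrightarrow> M z = 0 \<Longrightarrow> inner y z = 0"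
  shows "y \<in> M ` S"
proof -
  interpret linear_on_subspace S M
    by (fact lin)
  obtain c d where cd: "c \<in> span (M ` S)" "\<And>w. w \<in> span (M ` S) \<Longrightarrow> orthogonal d w" "y = c + d"
    using orthogonal_subspace_decomp_exists by blast
  have c: "c \<in> M ` S"
    using cd(1) subspace_image by (metis span_eq_iff)
  have d: "d \<in> S"
    using cd(3) c into y(1) subspace by (metis add_diff_cancel_left' subsetD subspace_diff)
  txt \<open>The component d of y orthogonal to \<open>M ` S\<close> lies in the kernel, since
    \<open>\<langle>M d, M d\<rangle> = \<langle>d, M (M d)\<rangle> = 0\<close>.\<close>
  have "M d \<in> S"
    using d into by blast
  then have "inner (M d) (M d) = 0"
    using selfadjoint[OF d] cd(2) by (simp add: orthogonal_def span_base)
  then have "inner y d = 0"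
    using y(2) d by simp
  moreover have "inner c d = 0"
    using cd(2)[OF cd(1)] by (simp add: orthogonal_def inner_commute)
  ultimately have "inner d d = 0"
    using cd(3) by (simp add: inner_add_left)
  then show ?thesis
    using cd(3) c by simp
qed

lemma pinv_on_galerkin:
  fixes A :: "real^'n^'n" and b :: "real^'n" and W :: "'p::euclidean_space \<Rightarrow> real^'n"
  assumes lin: "linear_on_subspace S W"
    and symmetric: "transpose A = A"
    and pos_def: "\<forall>x. x \<noteq> 0 \<longrightarrow> 0 < inner x (A *v x)"
  defines "x \<equiv> pinv_on S (\<lambda>q. adjoint_on S W (A *v W q)) (adjoint_on S W b)"
  shows "x \<in> S" and "q \<in> S \<Longrightarrow> inner (A *v W x) (W q) = inner b (W q)"
proof -
  interpret linear_on_subspace S W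
    by (fact lin)
  define M where "M q = adjoint_on S W (A *v W q)" for q
  define y where "y = adjoint_on S W b"
  have inner_M: "inner (M z) q = inner (A *v W z) (W q)" if "q \<in> S" for z q
    unfolding M_def using that by (rule inner_adjoint_on)
  have M_lin: "linear_on_subspace S M"
    by unfold_locales (simp_all add: M_def subspace add scaleR matrix_vector_right_distrib
        matrix_vector_mult_scaleR adjoint_on_add adjoint_on_scaleR)
  have "y \<in> M ` S"
  proof (rule selfadjoint_image_orthogonal_kernel[OF M_lin])
    show "M ` S \<subseteq> S"
      unfolding M_def using adjoint_on_mem by blast
    show "inner (M z) q = inner z (M q)" if "z \<in> S" "q \<in> S" for z q
      using inner_M[OF that(2)] inner_M[OF that(1)] symmetric_matrix_inner_commute[OF symmetric]
      by (simp add: inner_commute)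
    show "y \<in> S"
      unfolding y_def by (rule adjoint_on_mem)
    show "inner y z = 0" if "z \<in> S" "M z = 0" for z
    proof -
      txt \<open>By definiteness the kernel of M is that of W, which is orthogonal to \<open>y = W\<^sup>T b\<close>.\<close>
      have "inner (W z) (A *v W z) = 0"
        using inner_M[OF that(1), of z] that(2) by (simp add: inner_commute)
      then have "W z = 0"
        using pos_def by (metis less_irrefl)
      then show ?thesis
        unfolding y_def using that(1) by (simp add: inner_adjoint_on)
    qed
  qed
  moreover have "x = pinv_on S M y"
    unfolding x_def M_def[abs_def] y_def ..
  ultimately have x: "x \<in> S" "M x = y"
    using pinv_on_image[OF M_lin] by simp_all
  then show "x \<in> S"
    by simp
  show "inner (A *v W x) (W q) = inner b (W q)" if "q \<in> S"
    using inner_M[OF that, of x] inner_adjoint_on[OF that, of b] x(2) unfolding y_def by simp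
qed

text \<open>The paper's functional is \<open>f = E / \<parallel>b\<parallel>\<^sup>2\<close>.\<close>
definition quadratic_energy :: "real^'n^'n \<Rightarrow> real^'n \<Rightarrow> real^'n \<Rightarrow> real" where
  "quadratic_energy A b w = inner (A *v w) w / 2 - inner b w"

lemma quadratic_energy_galerkin_step:
  fixes A :: "real^'n^'n"
  assumes "transpose A = A" and galerkin: "inner (A *v v) w = inner b w"
  shows "quadratic_energy A b (v + w) - quadratic_energy A b v = inner w (A *v w) / 2"
proof -
  have "inner (A *v w) v = inner (A *v v) w"
    using symmetric_matrix_inner_commute[OF assms(1), of w v] by (simp add: inner_commute)
  then show ?thesis
    using galerkin unfolding quadratic_energy_def
    by (simp add: matrix_vector_right_distrib inner_add_left inner_add_right inner_commute algebra_simps)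
qed

lemma tendsto_quadratic_energy:
  assumes "u \<longlonglongrightarrow> w"
  shows "(\<lambda>k. quadratic_energy A b (u k)) \<longlonglongrightarrow> quadratic_energy A b w"
  unfolding quadratic_energy_def
  by (intro tendsto_intros bounded_linear.tendsto[OF matrix_vector_mul_bounded_linear] assms) simp

lemma decreasing_step_le_total:
  fixes a :: "nat \<Rightarrow> real"
  assumes decreasing: "\<And>j. j < L \<Longrightarrow> a (Suc j) \<le> a j" and "j < L"
  shows "a j - a (Suc j) \<le> a 0 - a L"
proof -
  have antimono: "a n \<le> a m" if "m \<le> n" "n \<le> L" for m n
    using that
  proof (induction n rule: dec_induct)
    case (step n)
    then show ?case
      using decreasing[of n] by simp
  qed simp
  show ?thesis
    using antimono[of 0 j] antimono[of "Suc j" L] \<open>j < L\<close> by simp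
qed

lemma sufficient_decrease_sweeps_tendsto:
  fixes v :: "nat \<Rightarrow> nat \<Rightarrow> 'a::real_normed_vector" and E :: "'a \<Rightarrow> real"
  assumes "c > 0"
    and decrease: "\<And>k j. k \<ge> K \<Longrightarrow> j < L \<Longrightarrow>
      c * (norm (v k j - v k (Suc j)))\<^sup>2 \<le> E (v k j) - E (v k (Suc j))"
    and first: "\<And>k. k \<ge> K \<Longrightarrow> v k 0 = u k"
    and last: "\<And>k. k \<ge> K \<Longrightarrow> v k L = u (Suc k)"
    and u: "u \<longlonglongrightarrow> w" and E: "(\<lambda>k. E (u k)) \<longlonglongrightarrow> e"
    and "\<mu> \<le> L"
  shows "(\<lambda>k. v k \<mu>) \<longlonglongrightarrow> w"
proof -
  have step: "(\<lambda>k. v k j - v k (Suc j)) \<longlonglongrightarrow> 0" if "j < L" for j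
  proof -
    have bound: "(norm (v k j - v k (Suc j)))\<^sup>2 \<le> (E (u k) - E (u (Suc k))) / c" if "k \<ge> K" for k
    proof -
      have "E (v k (Suc i)) \<le> E (v k i)" if "i < L" for i
      proof -
        have "0 \<le> c * (norm (v k i - v k (Suc i)))\<^sup>2"
          using \<open>c > 0\<close> by simp
        then show ?thesis
          using decrease[OF \<open>k \<ge> K\<close> that] by linarith
      qed
      then have "E (v k j) - E (v k (Suc j)) \<le> E (u k) - E (u (Suc k))"
        using decreasing_step_le_total[of L "\<lambda>i. E (v k i)" j] \<open>j < L\<close> first last that by simp
      then show ?thesis
        using decrease[OF that \<open>j < L\<close>] \<open>c > 0\<close> by (simp add: field_simps)
    qed
    have "(\<lambda>k. (E (u k) - E (u (Suc k))) / c) \<longlonglongrightarrow> 0"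
      using tendsto_divide[OF tendsto_diff[OF E LIMSEQ_Suc[OF E]] tendsto_const, of c] \<open>c > 0\<close>
      by simp
    then have "(\<lambda>k. (norm (v k j - v k (Suc j)))\<^sup>2) \<longlonglongrightarrow> 0"
    proof (rule tendsto_sandwich[OF _ _ tendsto_const, rotated 2])
      show "\<forall>\<^sub>F k in sequentially. (norm (v k j - v k (Suc j)))\<^sup>2 \<le> (E (u k) - E (u (Suc k))) / c"
        using bound by (rule eventually_sequentiallyI)
    qed simp_all
    then have "(\<lambda>k. norm (v k j - v k (Suc j))) \<longlonglongrightarrow> 0"
      using tendsto_real_sqrt by fastforce
    then show ?thesis
      by (rule tendsto_norm_zero_iff[THEN iffD1])
  qed
  show ?thesis
    using \<open>\<mu> \<le> L\<close>
  proof (induction \<mu>)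
    case 0
    have "\<forall>\<^sub>F k in sequentially. u k = v k 0"
      by (auto intro: eventually_sequentiallyI first[symmetric])
    then show ?case
      using u tendsto_cong by fastforce
  next
    case (Suc j)
    then have "(\<lambda>k. v k j - (v k j - v k (Suc j))) \<longlonglongrightarrow> w - 0"
      by (intro tendsto_diff step) auto
    then show ?case
      by simp
  qed
qed

locale als_iteration =
  fixes L :: nat and A :: "real^'n^'n" and b :: "real^'n"
    and Ps :: "nat \<Rightarrow> 'p::euclidean_space set" and U :: "(nat \<Rightarrow> 'p) \<Rightarrow> real^'n"
    and p :: "nat \<Rightarrow> nat \<Rightarrow> 'p"
  assumes symmetric: "transpose A = A"
    and pos_def: "\<forall>x. x \<noteq> 0 \<longrightarrow> inner x (A *v x) > 0"
    and subspaces: "\<forall>\<mu>\<in>{1..L}. subspace (Ps \<mu>)"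
    and multilinear: "multilinear_on L Ps U"
    and initial: "p 1 \<in> prodP L Ps"
    and outside: "\<forall>k\<ge>1. \<forall>i. i \<notin> {1..L} \<longrightarrow> p (Suc k) i = 0"
    and update: "\<forall>k\<ge>1. \<forall>\<mu>\<in>{1..L}.
       p (Suc k) \<mu> =
         pinv_on (Ps \<mu>)
           (\<lambda>q. adjoint_on (Ps \<mu>) (als_W U p k \<mu>) (A *v als_W U p k \<mu> q))
           (adjoint_on (Ps \<mu>) (als_W U p k \<mu>) b)"
begin

lemma linear_on_subspace_als_W:
  assumes "p k \<in> prodP L Ps" "k \<ge> 1" "\<mu> \<in> {1..L}" "\<forall>i\<in>{1..<\<mu>}. p (Suc k) i \<in> Ps i"
  shows "linear_on_subspace (Ps \<mu>) (als_W U p k \<mu>)"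
proof -
  have "(\<lambda>i. if i < \<mu> then p (Suc k) i else p k i) \<in> prodP L Ps"
    using assms outside unfolding prodP_def by auto
  then show ?thesis
    using multilinear subspaces assms(3)
    unfolding linear_on_subspace_def multilinear_on_def als_W_def[abs_def] by blast
qed

lemma update_mem:
  assumes "p k \<in> prodP L Ps" "k \<ge> 1"
  shows "\<mu> \<in> {1..L} \<Longrightarrow> p (Suc k) \<mu> \<in> Ps \<mu>"
proof (induction \<mu> rule: less_induct)
  case (less \<mu>)
  then have "linear_on_subspace (Ps \<mu>) (als_W U p k \<mu>)"
    using assms by (intro linear_on_subspace_als_W) auto
  then show ?case
    using pinv_on_galerkin(1)[OF _ symmetric pos_def] update assms(2) less.prems by simp
qed

lemma iterate_mem: "k \<ge> 1 \<Longrightarrow> p k \<in> prodP L Ps"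
proof (induction k rule: nat_induct_at_least)
  case (Suc k)
  then show ?case
    using update_mem outside unfolding prodP_def by auto
qed (use initial in simp)

lemma galerkin:
  assumes "k \<ge> 1" "\<mu> \<in> {1..L}" "q \<in> Ps \<mu>"
  shows "inner (A *v als_W U p k \<mu> (p (Suc k) \<mu>)) (als_W U p k \<mu> q) = inner b (als_W U p k \<mu> q)"
proof -
  have "linear_on_subspace (Ps \<mu>) (als_W U p k \<mu>)"
    using iterate_mem[of k] iterate_mem[of "Suc k"] assms
    by (intro linear_on_subspace_als_W) (auto simp: prodP_def)
  then show ?thesis
    using pinv_on_galerkin(2)[OF _ symmetric pos_def] update assms by simp
qed

lemma als_v_eq_als_W: "als_v U p k \<mu> = als_W U p k \<mu> (p (Suc k) \<mu>)"
  unfolding als_v_def als_W_def by (rule arg_cong[where f = U]) auto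

lemma als_v_eq_als_W_Suc: "als_v U p k j = als_W U p k (Suc j) (p k (Suc j))"
  unfolding als_v_def als_W_def by (rule arg_cong[where f = U]) auto

lemma als_v_first: "k \<ge> 1 \<Longrightarrow> als_v U p k 0 = U (p k)"
  using iterate_mem[of k] iterate_mem[of "Suc k"]
  unfolding als_v_def prodP_def by (intro arg_cong[where f = U]) auto

lemma als_v_last: "k \<ge> 1 \<Longrightarrow> als_v U p k L = U (p (Suc k))"
  using iterate_mem[of k] iterate_mem[of "Suc k"]
  unfolding als_v_def prodP_def by (intro arg_cong[where f = U]) (auto simp: fun_eq_iff)

lemma energy_drop:
  assumes "k \<ge> 1" "j < L"
  defines "e \<equiv> als_v U p k j - als_v U p k (Suc j)"
  shows "quadratic_energy A b (als_v U p k j) - quadratic_energy A b (als_v U p k (Suc j))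
    = inner e (A *v e) / 2"
proof -
  let ?W = "als_W U p k (Suc j)"
  have mem: "p k (Suc j) \<in> Ps (Suc j)" "p (Suc k) (Suc j) \<in> Ps (Suc j)"
    using iterate_mem[of k] iterate_mem[of "Suc k"] assms(1,2) unfolding prodP_def by auto
  have "linear_on_subspace (Ps (Suc j)) ?W"
    using iterate_mem[of k] iterate_mem[of "Suc k"] assms(1,2)
    by (intro linear_on_subspace_als_W) (auto simp: prodP_def)
  then have "e = ?W (p k (Suc j) - p (Suc k) (Suc j))"
    unfolding e_def als_v_eq_als_W_Suc[of k j] als_v_eq_als_W[of k "Suc j"]
    using mem by (simp add: linear_on_subspace.diff)
  then have "inner (A *v als_v U p k (Suc j)) e = inner b e"
    using galerkin[OF assms(1), of "Suc j"] assms(2) mem subspaces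
    by (simp add: als_v_eq_als_W subspace_diff)
  from quadratic_energy_galerkin_step[OF symmetric this]
  show ?thesis
    unfolding e_def by simp
qed

lemma als_v_tendsto:
  assumes "(\<lambda>k. U (p k)) \<longlonglongrightarrow> w" "\<mu> \<le> L"
  shows "(\<lambda>k. als_v U p k \<mu>) \<longlonglongrightarrow> w"
proof -
  obtain c where "c > 0" and coercive: "\<And>x. c * (norm x)\<^sup>2 \<le> inner x (A *v x)"
    using pos_def_matrix_coercive[OF pos_def] by blast
  show ?thesis
  proof (rule sufficient_decrease_sweeps_tendsto[where c = "c / 2" and K = 1])
    show "c / 2 * (norm (als_v U p k j - als_v U p k (Suc j)))\<^sup>2
      \<le> quadratic_energy A b (als_v U p k j) - quadratic_energy A b (als_v U p k (Suc j))"
      if "k \<ge> 1" "j < L" for k j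
      using energy_drop[OF that] coercive[of "als_v U p k j - als_v U p k (Suc j)"] by simp
  qed (use \<open>c > 0\<close> assms als_v_first als_v_last tendsto_quadratic_energy in auto)
qed

end

theorem mainTheorem13:
  fixes d L :: nat
    and m :: "nat \<Rightarrow> nat"
    and A :: "real^'n^'n"
    and b vbar :: "real^'n"
    and Ps :: "nat \<Rightarrow> 'p::euclidean_space set"
    and U :: "(nat \<Rightarrow> 'p) \<Rightarrow> real^'n"
    and p :: "nat \<Rightarrow> nat \<Rightarrow> 'p"
  assumes dimV: "CARD('n) = (\<Prod>\<nu>\<in>{1..d}. m \<nu>)"
    and Ld: "L \<ge> d"
    and Asym: "transpose A = A"
    and Apd: "\<forall>x. x \<noteq> 0 \<longrightarrow> inner x (A *v x) > 0"
    and bnz: "b \<noteq> 0"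
    and Psub: "\<forall>\<mu>\<in>{1..L}. subspace (Ps \<mu>)"
    and Umult: "multilinear_on L Ps U"
    and p1: "p 1 \<in> prodP L Ps"
    and pout: "\<forall>k\<ge>1. \<forall>i. i \<notin> {1..L} \<longrightarrow> p (Suc k) i = 0"
    and als: "\<forall>k\<ge>1. \<forall>\<mu>\<in>{1..L}.
       p (Suc k) \<mu> =
         pinv_on (Ps \<mu>)
           (\<lambda>q. adjoint_on (Ps \<mu>) (als_W U p k \<mu>) (A *v als_W U p k \<mu> q))
           (adjoint_on (Ps \<mu>) (als_W U p k \<mu>) b)"
    and conv: "(\<lambda>k. U (p k)) \<longlonglongrightarrow> vbar"
  shows "\<forall>\<mu>\<in>{0..L}. (\<lambda>k. als_v U p k \<mu>) \<longlonglongrightarrow> vbar"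
proof -
  interpret als_iteration L A b Ps U p
    using Asym Apd Psub Umult p1 pout als by unfold_locales
  show ?thesis
    using als_v_tendsto[OF conv] by simp
qed

end
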